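(* Let $n\geqslant 2$ and $N=2^n-1$. There is a bijection between the set of $n$-tuples $(y_1,\dots,y_n)$ of positive integers and the set of reduced $N$-tuples $(z_1,\dots,z_N)$ of positive integers, such that $$\forall j\in\{1,\dots,n\},\quad y_j=\prod_{1\leqslant h\leqslant N}z_h^{\varepsilon_j(h)}\quad\text{and}\quad \mathrm{lcm}(y_1,\dots,y_n)=\prod_{1\leqslant h\leqslant N}z_h.$$
   Context: For $h\in\{1,\dots,N\}$ write $h=\sum_{j=1}^n\varepsilon_j(h)2^{j-1}$ with $\varepsilon_j(h)\in\{0,1\}$. Write $h\preceq\ell$ if $\varepsilon_j(h)\leqslant\varepsilon_j(\ell)$ for all $j$. An $N$-tuple $(z_1,\dots,z_N)$ is reduced if $\gcd(z_h,z_\ell)=1$ whenever $h\not\preceq\ell$ and $\ell\not\preceq h$. *)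

theory Defs
  imports Main "HOL-Library.FuncSet"
begin

definition eps :: "nat \<Rightarrow> nat \<Rightarrow> nat" where
  "eps j h = (h div 2 ^ (j - 1)) mod 2"

definition preceq :: "nat \<Rightarrow> nat \<Rightarrow> nat \<Rightarrow> bool" where
  "preceq n h l \<longleftrightarrow> (\<forall>j\<in>{1..n}. eps j h \<le> eps j l)"

definition reduced :: "nat \<Rightarrow> (nat \<Rightarrow> nat) \<Rightarrow> bool" where
  "reduced n z \<longleftrightarrow> (\<forall>h\<in>{1..2^n - 1}. \<forall>l\<in>{1..2^n - 1}.
      \<not> preceq n h l \<and> \<not> preceq n l h \<longrightarrow> gcd (z h) (z l) = 1)"

end

theory Submission
  imports Defs "HOL-Computational_Algebra.Primes"
begin

text \<open>
  Fix a prime p and put c h = v_p(z_h) and a j = v_p(y_j). Writing B(h) = bitset n h for the set of binary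
  digits of h, the product formula reads a j = \<Sum>{c h | j \<in> B(h)}, and B is a bijection from
  {1..N} onto the nonempty subsets of {1..n}. Being reduced says exactly that, for every p, the
  sets B(h) with c h > 0 form a chain. Every a arises from exactly one such chain-supported c:
  the largest set of the chain must be {j. a j > 0}, and removing one copy of it lowers a by its
  indicator. Doing this for all primes at once gives the bijection. Since the smallest set of the
  chain lies in all the others, max_j a j = \<Sum>_h c h, which is the lcm identity.
\<close>

definition weight :: "('h \<Rightarrow> 'a set) \<Rightarrow> 'h set \<Rightarrow> ('h \<Rightarrow> nat) \<Rightarrow> 'a \<Rightarrow> nat" where
  "weight S H c j = (\<Sum>h\<in>H. if j \<in> S h then c h else 0)"

definition chain_supported :: "('h \<Rightarrow> 'a set) \<Rightarrow> 'h set \<Rightarrow> ('h \<Rightarrow> nat) \<Rightarrow> bool" where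
  "chain_supported S H c \<longleftrightarrow> chain\<^sub>\<subseteq> (S ` {h\<in>H. 0 < c h})"

lemma chain_supported_iff:
  "chain_supported S H c \<longleftrightarrow>
    (\<forall>h\<in>H. \<forall>l\<in>H. 0 < c h \<longrightarrow> 0 < c l \<longrightarrow> S h \<subseteq> S l \<or> S l \<subseteq> S h)"
  unfolding chain_supported_def chain_subset_def by blast

lemma chain_supported_cong:
  "(\<And>h. h \<in> H \<Longrightarrow> c h = d h) \<Longrightarrow> chain_supported S H c \<longleftrightarrow> chain_supported S H d"
  unfolding chain_supported_iff by simp

lemma weight_cong: "(\<And>h. h \<in> H \<Longrightarrow> c h = d h) \<Longrightarrow> weight S H c j = weight S H d j"
  unfolding weight_def by (rule sum.cong) auto

lemma chain_supported_mono:
  "chain_supported S H c \<Longrightarrow> (\<And>h. d h \<le> c h) \<Longrightarrow> chain_supported S H d"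
  unfolding chain_supported_def chain_subset_def by (auto intro: less_le_trans)

lemma le_weight: "finite H \<Longrightarrow> h \<in> H \<Longrightarrow> j \<in> S h \<Longrightarrow> c h \<le> weight S H c j"
  unfolding weight_def using member_le_sum[of h H "\<lambda>h. if j \<in> S h then c h else 0"] by simp

lemma weight_posD:
  assumes "0 < weight S H c j"
  shows "\<exists>h\<in>H. 0 < c h \<and> j \<in> S h"
proof (rule ccontr)
  assume "\<not> (\<exists>h\<in>H. 0 < c h \<and> j \<in> S h)"
  then have "weight S H c j = 0"
    unfolding weight_def by (intro sum.neutral) auto
  then show False using assms by simp
qed

lemma weight_increment:
  assumes "finite H" "h0 \<in> H"
  shows "weight S H (c(h0 := c h0 + 1)) j = weight S H c j + (if j \<in> S h0 then 1 else 0)"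
proof -
  have "(\<Sum>h\<in>H - {h0}. if j \<in> S h then (c(h0 := c h0 + 1)) h else 0)
      = (\<Sum>h\<in>H - {h0}. if j \<in> S h then c h else 0)"
    by (rule sum.cong) auto
  then show ?thesis
    using sum.remove[OF assms, of "\<lambda>h. if j \<in> S h then c h else 0"]
      sum.remove[OF assms, of "\<lambda>h. if j \<in> S h then (c(h0 := c h0 + 1)) h else 0"]
    unfolding weight_def by simp
qed

lemma sum_increment:
  fixes c :: "'h \<Rightarrow> nat"
  assumes "finite H" "h0 \<in> H"
  shows "sum (c(h0 := c h0 + 1)) H = sum c H + 1"
  using weight_increment[OF assms, where S = "\<lambda>_. UNIV" and c = c] by (simp add: weight_def)

lemma chain_supported_top:
  assumes "finite H" "chain_supported S H c" "\<exists>h\<in>H. 0 < c h"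
  obtains t where "t \<in> H" "0 < c t" "S t = {j. 0 < weight S H c j}"
proof -
  let ?B = "S ` {h\<in>H. 0 < c h}"
  have "\<Union>?B \<in> ?B"
    using assms by (intro Union_in_chain) (auto simp: chain_supported_def chain_subset_alt_def)
  then obtain t where t: "t \<in> H" "0 < c t" "S t = \<Union>?B" by auto
  have "\<Union>?B = {j. 0 < weight S H c j}"
  proof (intro equalityI subsetI)
    fix j assume "j \<in> \<Union>?B"
    then obtain h where h: "h \<in> H" "0 < c h" "j \<in> S h" by auto
    have "c h \<le> weight S H c j" using le_weight[where S = S and c = c, OF assms(1) h(1) h(3)] .
    with h(2) show "j \<in> {j. 0 < weight S H c j}" by simp
  next
    fix j assume "j \<in> {j. 0 < weight S H c j}"
    then obtain h where "h \<in> H" "0 < c h" "j \<in> S h" using weight_posD[of S H c j] by auto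
    then show "j \<in> \<Union>?B" by auto
  qed
  then show thesis using t that by simp
qed

locale nonempty_subset_indexing =
  fixes I :: "'a set" and H :: "'h set" and S :: "'h \<Rightarrow> 'a set"
  assumes finite_I: "finite I"
    and bij_S: "bij_betw S H (Pow I - {{}})"
begin

lemma finite_H: "finite H"
  using bij_betw_finite[OF bij_S] finite_I by simp

lemma S_mem: "h \<in> H \<Longrightarrow> S h \<in> Pow I - {{}}"
  by (rule bij_betw_apply[OF bij_S])

lemma S_subset: "h \<in> H \<Longrightarrow> S h \<subseteq> I"
  using S_mem by simp

lemma S_nonempty: "h \<in> H \<Longrightarrow> S h \<noteq> {}"
  using S_mem by simp

lemma S_eqD: "h \<in> H \<Longrightarrow> l \<in> H \<Longrightarrow> S h = S l \<Longrightarrow> h = l"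
  using bij_betw_imp_inj_on[OF bij_S] by (rule inj_onD)

lemma S_surj:
  assumes "T \<subseteq> I" "T \<noteq> {}"
  obtains h where "h \<in> H" "S h = T"
proof -
  have "T \<in> S ` H" using assms bij_betw_imp_surj_on[OF bij_S] by simp
  then show thesis using that by blast
qed

lemma weight_outside:
  assumes "j \<notin> I"
  shows "weight S H c j = 0"
proof (rule ccontr)
  assume "weight S H c j \<noteq> 0"
  then obtain h where "h \<in> H" "j \<in> S h" using weight_posD[of S H c j] by auto
  then show False using S_subset assms by auto
qed

lemma all_zero_iff_weights_zero: "(\<forall>h\<in>H. c h = 0) \<longleftrightarrow> (\<forall>j. weight S H c j = 0)"
proof
  assume "\<forall>h\<in>H. c h = 0"
  then show "\<forall>j. weight S H c j = 0" unfolding weight_def by (auto intro: sum.neutral)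
next
  assume w: "\<forall>j. weight S H c j = 0"
  show "\<forall>h\<in>H. c h = 0"
  proof
    fix h assume h: "h \<in> H"
    then obtain j where j: "j \<in> S h" using S_nonempty by blast
    show "c h = 0" using le_weight[where S = S and c = c, OF finite_H h j] w by simp
  qed
qed

lemma chain_supported_bottom:
  assumes "chain_supported S H c" "0 < sum c H"
  obtains j where "j \<in> I" "weight S H c j = sum c H"
proof -
  let ?B = "S ` {h\<in>H. 0 < c h}"
  have "\<exists>h\<in>H. 0 < c h"
  proof (rule ccontr)
    assume "\<not> (\<exists>h\<in>H. 0 < c h)"
    then have "sum c H = 0" by (intro sum.neutral) auto
    with assms(2) show False by simp
  qed
  then have "\<Inter>?B \<in> ?B"
    using assms finite_H by (intro Inter_in_chain) (auto simp: chain_supported_def chain_subset_alt_def)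
  then obtain b where b: "b \<in> H" "S b = \<Inter>?B" by auto
  obtain j where j: "j \<in> S b" using S_nonempty[OF b(1)] by auto
  have "(if j \<in> S h then c h else 0) = c h" if "h \<in> H" for h
    using b(2) j that by auto
  then have "weight S H c j = sum c H"
    unfolding weight_def by (rule sum.cong[OF refl])
  moreover have "j \<in> I" using S_subset[OF b(1)] j by blast
  ultimately show thesis using that by blast
qed

lemma chain_supported_unique:
  assumes "chain_supported S H c" "chain_supported S H c'"
    and "\<forall>j\<in>I. weight S H c j = weight S H c' j"
  shows "\<forall>h\<in>H. c h = c' h"
  using assms
proof (induction "sum c H" arbitrary: c c' rule: less_induct)
  case less
  have w: "weight S H c j = weight S H c' j" for j
    using less.prems(3) weight_outside by (cases "j \<in> I") auto
  show ?case
  proof (cases "\<forall>h\<in>H. c h = 0")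
    case True
    moreover have "\<forall>h\<in>H. c' h = 0"
      using True w all_zero_iff_weights_zero[of c] all_zero_iff_weights_zero[of c'] by simp
    ultimately show ?thesis by simp
  next
    case False
    then have pos: "\<exists>h\<in>H. 0 < c h" and pos': "\<exists>h\<in>H. 0 < c' h"
      using w all_zero_iff_weights_zero[of c] all_zero_iff_weights_zero[of c'] by auto
    obtain t where t: "t \<in> H" "0 < c t" "S t = {j. 0 < weight S H c j}"
      using chain_supported_top[OF finite_H less.prems(1) pos] .
    obtain t' where t': "t' \<in> H" "0 < c' t'" "S t' = {j. 0 < weight S H c' j}"
      using chain_supported_top[OF finite_H less.prems(2) pos'] .
    have "t' = t" using S_eqD[OF t'(1) t(1)] t(3) t'(3) w by simp
    \<comment> \<open>both chains have the same top, so remove one copy of it from each\<close>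
    define d where "d = c(t := c t - 1)"
    define d' where "d' = c'(t := c' t - 1)"
    have c_eq: "c = d(t := d t + 1)" and c'_eq: "c' = d'(t := d' t + 1)"
      using t(2) t'(2) \<open>t' = t\<close> by (auto simp: d_def d'_def)
    have "weight S H d j = weight S H d' j" for j
      using w[of j] weight_increment[OF finite_H t(1), where S = S and c = d and j = j]
        weight_increment[OF finite_H t(1), where S = S and c = d' and j = j]
      by (simp add: c_eq c'_eq)
    moreover have "sum d H < sum c H"
      using sum_increment[OF finite_H t(1), of d] by (simp add: c_eq)
    moreover have "chain_supported S H d" "chain_supported S H d'"
      using less.prems(1,2) by (auto intro: chain_supported_mono simp: d_def d'_def)
    ultimately have "\<forall>h\<in>H. d h = d' h" using less.hyps by blast
    then show ?thesis by (subst c_eq, subst c'_eq) simp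
  qed
qed

lemma chain_supported_exists:
  fixes a :: "'a \<Rightarrow> nat"
  shows "\<exists>c. chain_supported S H c \<and> (\<forall>j\<in>I. weight S H c j = a j)"
proof (induction "\<Sum>j\<in>I. a j" arbitrary: a rule: less_induct)
  case less
  show ?case
  proof (cases "\<forall>j\<in>I. a j = 0")
    case True
    have "chain_supported S H (\<lambda>_. 0)" by (simp add: chain_supported_def chain_subset_def)
    moreover have "weight S H (\<lambda>_. 0) j = 0" for j by (simp add: weight_def)
    ultimately show ?thesis using True by (intro exI[of _ "\<lambda>_. 0"]) auto
  next
    case False
    define T where "T = {j\<in>I. 0 < a j}"
    have "T \<subseteq> I" "T \<noteq> {}" using False by (auto simp: T_def)
    then obtain t where t: "t \<in> H" "S t = T" by (rule S_surj)
    define a' where "a' j = a j - (if j \<in> T then 1 else 0)" for j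
    have "(\<Sum>j\<in>I. a' j) < (\<Sum>j\<in>I. a j)"
      using finite_I \<open>T \<subseteq> I\<close> \<open>T \<noteq> {}\<close>
      by (intro sum_strict_mono_ex1) (auto simp: a'_def T_def)
    then obtain c' where c': "chain_supported S H c'" "\<forall>j\<in>I. weight S H c' j = a' j"
      using less.hyps by blast
    have below_T: "S h \<subseteq> T" if h: "h \<in> H" "0 < c' h" for h
    proof
      fix j assume j: "j \<in> S h"
      then have "j \<in> I" using S_subset[OF h(1)] by blast
      have "c' h \<le> weight S H c' j" using le_weight[where S = S and c = c', OF finite_H h(1) j] .
      then have "0 < a' j" using h(2) c'(2) \<open>j \<in> I\<close> by simp
      then show "j \<in> T" using \<open>j \<in> I\<close> by (auto simp: a'_def T_def split: if_splits)
    qed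
    define c where "c = c'(t := c' t + 1)"
    have "S ` {h\<in>H. 0 < c h} \<subseteq> insert T (S ` {h\<in>H. 0 < c' h})"
      using t by (auto simp: c_def)
    moreover have "chain\<^sub>\<subseteq> (insert T (S ` {h\<in>H. 0 < c' h}))"
      using c'(1) below_T unfolding chain_supported_def chain_subset_def by auto
    ultimately have "chain_supported S H c"
      unfolding chain_supported_def chain_subset_def by (meson subsetD)
    moreover have "weight S H c j = a j" if "j \<in> I" for j
      using weight_increment[OF finite_H t(1), where S = S and c = c' and j = j] c'(2) that t(2)
      by (auto simp: c_def a'_def T_def)
    ultimately show ?thesis by blast
  qed
qed

end

definition bitset :: "nat \<Rightarrow> nat \<Rightarrow> nat set" where
  "bitset n h = {j\<in>{1..n}. eps j h = 1}"

lemma eps_eq_bit: "eps j h = (if bit h (j - 1) then 1 else 0)"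
  unfolding eps_def by (simp add: bit_iff_odd odd_iff_mod_2_eq_one)

lemma mem_bitset_iff: "j \<in> bitset n h \<longleftrightarrow> j \<in> {1..n} \<and> bit h (j - 1)"
  unfolding bitset_def eps_eq_bit by simp

lemma eps_eq_indicator: "j \<in> {1..n} \<Longrightarrow> eps j h = (if j \<in> bitset n h then 1 else 0)"
  unfolding bitset_def eps_eq_bit by simp

lemma preceq_iff_bitset_subset: "preceq n h l \<longleftrightarrow> bitset n h \<subseteq> bitset n l"
  unfolding preceq_def bitset_def eps_eq_bit by auto

lemma bitset_eq_imp_eq:
  assumes "h < 2 ^ n" "l < 2 ^ n" "bitset n h = bitset n l"
  shows "h = l"
proof (rule bit_eqI)
  fix i
  show "bit h i \<longleftrightarrow> bit l i"
  proof (cases "i < n")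
    case True
    then have "Suc i \<in> bitset n h \<longleftrightarrow> Suc i \<in> bitset n l" using assms(3) by simp
    with True show ?thesis by (simp add: mem_bitset_iff)
  next
    case False
    then have "(2::nat) ^ n \<le> 2 ^ i" by simp
    then have "h < 2 ^ i" "l < 2 ^ i" using assms(1,2) by linarith+
    then show ?thesis by (simp add: bit_iff_odd)
  qed
qed

lemma bitset_surj:
  assumes "T \<subseteq> {1..n}"
  obtains h where "h < 2 ^ n" "bitset n h = T"
proof -
  define h :: nat where "h = horner_sum of_bool 2 (map (\<lambda>i. Suc i \<in> T) [0..<n])"
  have "h < 2 ^ n" using horner_sum_of_bool_2_less[of "map (\<lambda>i. Suc i \<in> T) [0..<n]"]
    by (simp add: h_def)
  moreover have "bit h (j - 1) \<longleftrightarrow> j \<in> T" if "j \<in> {1..n}" for j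
    using that unfolding h_def bit_horner_sum_bit_iff by auto
  then have "bitset n h = T" using assms by (auto simp: bitset_def eps_eq_bit)
  ultimately show thesis by (rule that)
qed

lemma bitset_indexing: "nonempty_subset_indexing {1..n} {1..2^n - 1} (bitset n)"
proof
  have "bitset n ` {1..2^n - 1} = Pow {1..n} - {{}}"
  proof (intro equalityI subsetI)
    fix T assume "T \<in> bitset n ` {1..2^n - 1}"
    then obtain h where h: "h \<in> {1..2^n - 1}" "T = bitset n h" by blast
    have "(0::nat) < 2 ^ n" by simp
    then have "h < 2 ^ n" using h(1) by auto
    then have "bitset n h \<noteq> bitset n 0" using bitset_eq_imp_eq[of h n 0] h(1) by auto
    then show "T \<in> Pow {1..n} - {{}}" using h(2) by (auto simp: bitset_def eps_def)
  next
    fix T assume "T \<in> Pow {1..n} - {{}}"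
    then obtain h where h: "h < 2 ^ n" "bitset n h = T" using bitset_surj by blast
    then have "h \<noteq> 0" using \<open>T \<in> Pow {1..n} - {{}}\<close> by (auto simp: bitset_def eps_def)
    with h show "T \<in> bitset n ` {1..2^n - 1}" by force
  qed
  moreover have "inj_on (bitset n) {1..2^n - 1}"
    by (rule inj_onI) (rule bitset_eq_imp_eq, auto)
  ultimately show "bij_betw (bitset n) {1..2^n - 1} (Pow {1..n} - {{}})"
    unfolding bij_betw_def by blast
qed simp

lemma gcd_eq_1_iff_no_common_prime:
  "gcd a b = 1 \<longleftrightarrow> (\<forall>p. prime p \<longrightarrow> \<not> (p dvd a \<and> p dvd b))" for a b :: nat
proof
  assume gcd: "gcd a b = 1"
  show "\<forall>p. prime p \<longrightarrow> \<not> (p dvd a \<and> p dvd b)"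
  proof (intro allI impI notI)
    fix p :: nat assume "prime p" "p dvd a \<and> p dvd b"
    then have "p dvd gcd a b" by simp
    with gcd \<open>prime p\<close> show False by simp
  qed
next
  assume "\<forall>p. prime p \<longrightarrow> \<not> (p dvd a \<and> p dvd b)"
  then show "gcd a b = 1" using prime_factor_nat[of "gcd a b"] by auto
qed

lemma multiplicity_prod_power:
  fixes z :: "'h \<Rightarrow> nat"
  assumes "finite A" "\<forall>h\<in>A. z h \<noteq> 0" "prime p"
  shows "multiplicity p (\<Prod>h\<in>A. z h ^ e h) = (\<Sum>h\<in>A. e h * multiplicity p (z h))"
proof -
  have "multiplicity p (\<Prod>h\<in>A. z h ^ e h) = (\<Sum>h\<in>A. multiplicity p (z h ^ e h))"
    by (rule prime_elem_multiplicity_prod_distrib) (use assms in \<open>auto simp: image_iff\<close>)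
  also have "\<dots> = (\<Sum>h\<in>A. e h * multiplicity p (z h))"
    by (rule sum.cong) (use assms in \<open>auto intro: prime_elem_multiplicity_power_distrib\<close>)
  finally show ?thesis .
qed

lemma multiplicity_digit_product:
  fixes z :: "nat \<Rightarrow> nat"
  assumes "\<forall>h\<in>{1..2^n - 1}. z h \<noteq> 0" "prime p" "j \<in> {1..n}"
  shows "multiplicity p (\<Prod>h\<in>{1..2^n - 1}. z h ^ eps j h)
       = weight (bitset n) {1..2^n - 1} (\<lambda>h. multiplicity p (z h)) j"
proof -
  have "(\<Sum>h\<in>{1..2^n - 1}. eps j h * multiplicity p (z h))
      = weight (bitset n) {1..2^n - 1} (\<lambda>h. multiplicity p (z h)) j"
    unfolding weight_def by (rule sum.cong) (simp_all add: eps_eq_indicator[OF assms(3)])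
  then show ?thesis using multiplicity_prod_power[OF _ assms(1,2)] by simp
qed

lemma reduced_iff_chain_supported:
  fixes z :: "nat \<Rightarrow> nat"
  assumes "\<forall>h\<in>{1..2^n - 1}. z h \<noteq> 0"
  shows "reduced n z \<longleftrightarrow>
    (\<forall>p. prime p \<longrightarrow> chain_supported (bitset n) {1..2^n - 1} (\<lambda>h. multiplicity p (z h)))"
proof -
  have "0 < multiplicity p (z h) \<longleftrightarrow> p dvd z h" if "prime p" "h \<in> {1..2^n - 1}" for p h
    using that assms by (simp add: prime_multiplicity_gt_zero_iff prime_imp_prime_elem)
  then show ?thesis
    unfolding reduced_def chain_supported_iff gcd_eq_1_iff_no_common_prime
      preceq_iff_bitset_subset by blast
qed

definition digit_products :: "nat \<Rightarrow> (nat \<Rightarrow> nat) \<Rightarrow> nat \<Rightarrow> nat" where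
  "digit_products n z = (\<lambda>j\<in>{1..n}. \<Prod>h\<in>{1..2^n - 1}. z h ^ eps j h)"

lemma digit_products_apply:
  "j \<in> {1..n} \<Longrightarrow> digit_products n z j = (\<Prod>h\<in>{1..2^n - 1}. z h ^ eps j h)"
  unfolding digit_products_def by simp

lemma digit_products_pos:
  "z \<in> {1..2^n - 1} \<rightarrow>\<^sub>E {x. 0 < x} \<Longrightarrow> digit_products n z \<in> {1..n} \<rightarrow>\<^sub>E {y. 0 < y}"
  unfolding digit_products_def by (auto intro!: prod_pos)

lemma digit_products_inj:
  "inj_on (digit_products n) {z \<in> {1..2^n - 1} \<rightarrow>\<^sub>E {x. 0 < x}. reduced n z}"
proof (rule inj_onI)
  fix z z' assume z: "z \<in> {z \<in> {1..2^n - 1} \<rightarrow>\<^sub>E {x. 0 < x}. reduced n z}"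
    and z': "z' \<in> {z \<in> {1..2^n - 1} \<rightarrow>\<^sub>E {x. 0 < x}. reduced n z}"
    and eq: "digit_products n z = digit_products n z'"
  have nz: "\<forall>h\<in>{1..2^n - 1}. z h \<noteq> 0" "\<forall>h\<in>{1..2^n - 1}. z' h \<noteq> 0"
    using z z' by (auto simp: PiE_iff)
  have "z h = z' h" if h: "h \<in> {1..2^n - 1}" for h
  proof (rule multiplicity_eq_nat)
    show "0 < z h" "0 < z' h" using nz h by auto
    fix p :: nat assume p: "prime p"
    have "\<forall>j\<in>{1..n}. weight (bitset n) {1..2^n - 1} (\<lambda>h. multiplicity p (z h)) j
        = weight (bitset n) {1..2^n - 1} (\<lambda>h. multiplicity p (z' h)) j"
    proof
      fix j assume j: "j \<in> {1..n}"
      have "(\<Prod>h\<in>{1..2^n - 1}. z h ^ eps j h) = (\<Prod>h\<in>{1..2^n - 1}. z' h ^ eps j h)"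
        using eq digit_products_apply[OF j] by metis
      then show "weight (bitset n) {1..2^n - 1} (\<lambda>h. multiplicity p (z h)) j
        = weight (bitset n) {1..2^n - 1} (\<lambda>h. multiplicity p (z' h)) j"
        using multiplicity_digit_product[OF nz(1) p j] multiplicity_digit_product[OF nz(2) p j]
        by metis
    qed
    moreover have "chain_supported (bitset n) {1..2^n - 1} (\<lambda>h. multiplicity p (z h))"
      using z p reduced_iff_chain_supported[OF nz(1)] by simp
    moreover have "chain_supported (bitset n) {1..2^n - 1} (\<lambda>h. multiplicity p (z' h))"
      using z' p reduced_iff_chain_supported[OF nz(2)] by simp
    ultimately show "multiplicity p (z h) = multiplicity p (z' h)"
      using nonempty_subset_indexing.chain_supported_unique[OF bitset_indexing] h by blast
  qed
  then show "z = z'"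
    using z z' by (intro PiE_ext[of z "{1..2^n - 1}" "\<lambda>_. {x. 0 < x}" z']) auto
qed

lemma digit_products_surj:
  assumes y: "y \<in> {1..n} \<rightarrow>\<^sub>E {y. 0 < y}"
  obtains z where "z \<in> {1..2^n - 1} \<rightarrow>\<^sub>E {x. 0 < x}" "reduced n z" "digit_products n z = y"
proof -
  interpret nonempty_subset_indexing "{1..n}" "{1..2^n - 1}" "bitset n"
    by (rule bitset_indexing)
  have "\<forall>p. \<exists>c. chain_supported (bitset n) {1..2^n - 1} c
      \<and> (\<forall>j\<in>{1..n}. weight (bitset n) {1..2^n - 1} c j = multiplicity p (y j))"
    by (rule allI, rule chain_supported_exists)
  then obtain C where C: "\<forall>p. chain_supported (bitset n) {1..2^n - 1} (C p)
      \<and> (\<forall>j\<in>{1..n}. weight (bitset n) {1..2^n - 1} (C p) j = multiplicity p (y j))"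
    by (rule choice[THEN exE])
  then have C_chain: "chain_supported (bitset n) {1..2^n - 1} (C p)"
    and C_weight: "\<And>j. j \<in> {1..n} \<Longrightarrow> weight (bitset n) {1..2^n - 1} (C p) j = multiplicity p (y j)"
    for p by blast+
  define P where "P = (\<Union>j\<in>{1..n}. prime_factors (y j))"
  have P: "finite P" "\<And>p. p \<in> P \<Longrightarrow> prime p"
    unfolding P_def by (auto intro: in_prime_factors_imp_prime)
  have C_outside: "C q h = 0" if "prime q" "q \<notin> P" "h \<in> {1..2^n - 1}" for q h
  proof -
    have "multiplicity q (y j) = 0" if j: "j \<in> {1..n}" for j
    proof (rule not_dvd_imp_multiplicity_0, rule notI)
      assume "q dvd y j"
      then have "q \<in> prime_factors (y j)"
        using \<open>prime q\<close> y j by (auto simp: in_prime_factors_iff PiE_iff)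
      then show False using \<open>q \<notin> P\<close> j by (auto simp: P_def)
    qed
    then have "weight (bitset n) {1..2^n - 1} (C q) j = 0" for j
      using C_weight weight_outside by (cases "j \<in> {1..n}") auto
    then show ?thesis using all_zero_iff_weights_zero that(3) by blast
  qed
  define z where "z = (\<lambda>h\<in>{1..2^n - 1}. \<Prod>p\<in>P. p ^ C p h)"
  have z: "z \<in> {1..2^n - 1} \<rightarrow>\<^sub>E {x. 0 < x}"
    using P(2) by (auto simp: z_def prime_gt_0_nat intro!: prod_pos)
  then have nz: "\<forall>h\<in>{1..2^n - 1}. z h \<noteq> 0" by auto
  have mult_z: "multiplicity q (z h) = C q h" if "prime q" "h \<in> {1..2^n - 1}" for q h
    using that C_outside by (simp add: z_def multiplicity_prod_prime_powers[OF P])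
  have "reduced n z"
    unfolding reduced_iff_chain_supported[OF nz]
  proof (intro allI impI)
    fix q :: nat assume "prime q"
    then have "chain_supported (bitset n) {1..2^n - 1} (\<lambda>h. multiplicity q (z h))
        \<longleftrightarrow> chain_supported (bitset n) {1..2^n - 1} (C q)"
      by (intro chain_supported_cong) (simp add: mult_z)
    with C_chain show "chain_supported (bitset n) {1..2^n - 1} (\<lambda>h. multiplicity q (z h))"
      by simp
  qed
  moreover have "digit_products n z j = y j" for j
  proof (cases "j \<in> {1..n}")
    case True
    have "(\<Prod>h\<in>{1..2^n - 1}. z h ^ eps j h) = y j"
    proof (rule multiplicity_eq_nat)
      show "0 < (\<Prod>h\<in>{1..2^n - 1}. z h ^ eps j h)" "0 < y j"
        using z y True by (auto simp: PiE_iff intro!: prod_pos)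
      fix q :: nat assume q: "prime q"
      have "multiplicity q (\<Prod>h\<in>{1..2^n - 1}. z h ^ eps j h)
          = weight (bitset n) {1..2^n - 1} (C q) j"
        unfolding multiplicity_digit_product[OF nz q True] using mult_z[OF q] by (rule weight_cong)
      then show "multiplicity q (\<Prod>h\<in>{1..2^n - 1}. z h ^ eps j h) = multiplicity q (y j)"
        using C_weight[OF True] by simp
    qed
    then show ?thesis by (simp add: digit_products_apply[OF True])
  next
    case False
    then show ?thesis using PiE_arb[OF y False] by (auto simp: digit_products_def)
  qed
  ultimately show thesis using that z by blast
qed

lemma digit_products_Lcm:
  assumes z: "z \<in> {1..2^n - 1} \<rightarrow>\<^sub>E {x. 0 < x}" and "reduced n z"
  shows "Lcm (digit_products n z ` {1..n}) = (\<Prod>h\<in>{1..2^n - 1}. z h)"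
proof (rule dvd_antisym)
  let ?Y = "digit_products n z ` {1..n}"
  have nz: "\<forall>h\<in>{1..2^n - 1}. z h \<noteq> 0" using z by auto
  show "Lcm ?Y dvd (\<Prod>h\<in>{1..2^n - 1}. z h)"
  proof (rule Lcm_least)
    fix b assume "b \<in> ?Y"
    then obtain j where "b = (\<Prod>h\<in>{1..2^n - 1}. z h ^ eps j h)"
      by (auto simp: digit_products_def)
    moreover have "z h ^ eps j h dvd z h" for h
      using eps_eq_bit[of j h] by simp
    ultimately show "b dvd (\<Prod>h\<in>{1..2^n - 1}. z h)" by (simp add: prod_dvd_prod)
  qed
  have "Lcm ?Y \<noteq> 0"
    using digit_products_pos[OF z] by (auto simp: Lcm_0_iff PiE_iff)
  show "(\<Prod>h\<in>{1..2^n - 1}. z h) dvd Lcm ?Y"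
  proof (rule multiplicity_le_imp_dvd)
    show "(\<Prod>h\<in>{1..2^n - 1}. z h) \<noteq> 0" using nz by simp
    fix p :: nat assume p: "prime p"
    have sum: "multiplicity p (\<Prod>h\<in>{1..2^n - 1}. z h) = (\<Sum>h\<in>{1..2^n - 1}. multiplicity p (z h))"
      using multiplicity_prod_power[OF _ nz p, of "\<lambda>_. 1"] by simp
    show "multiplicity p (\<Prod>h\<in>{1..2^n - 1}. z h) \<le> multiplicity p (Lcm ?Y)"
    proof (cases "(\<Sum>h\<in>{1..2^n - 1}. multiplicity p (z h)) = 0")
      case False
      have "chain_supported (bitset n) {1..2^n - 1} (\<lambda>h. multiplicity p (z h))"
        using assms(2) p reduced_iff_chain_supported[OF nz] by simp
      then obtain j where j: "j \<in> {1..n}"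
        "weight (bitset n) {1..2^n - 1} (\<lambda>h. multiplicity p (z h)) j
          = (\<Sum>h\<in>{1..2^n - 1}. multiplicity p (z h))"
        using nonempty_subset_indexing.chain_supported_bottom[OF bitset_indexing] False by blast
      have "digit_products n z j dvd Lcm ?Y" using j(1) by (intro dvd_Lcm) simp
      then have "multiplicity p (digit_products n z j) \<le> multiplicity p (Lcm ?Y)"
        using \<open>Lcm ?Y \<noteq> 0\<close> by (rule dvd_imp_multiplicity_le)
      then show ?thesis
        using sum j multiplicity_digit_product[OF nz p j(1)] by (simp add: digit_products_apply)
    qed (use sum in simp)
  qed
qed

theorem mainTheorem2:
  fixes n N :: nat
  assumes "n \<ge> 2" and "N = 2 ^ n - 1"
  shows "\<exists>f. bij_betw f ({1..n} \<rightarrow>\<^sub>E {y::nat. y > 0})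
                 {z \<in> {1..N} \<rightarrow>\<^sub>E {x::nat. x > 0}. reduced n z}
           \<and> (\<forall>y \<in> {1..n} \<rightarrow>\<^sub>E {y::nat. y > 0}.
                 (\<forall>j\<in>{1..n}. y j = (\<Prod>h\<in>{1..N}. (f y h) ^ eps j h))
               \<and> Lcm (y ` {1..n}) = (\<Prod>h\<in>{1..N}. f y h))"
proof -
  let ?Y = "{1..n} \<rightarrow>\<^sub>E {y::nat. y > 0}"
  let ?Z = "{z \<in> {1..N} \<rightarrow>\<^sub>E {x::nat. x > 0}. reduced n z}"
  have image: "digit_products n ` ?Z = ?Y"
    using digit_products_pos digit_products_surj unfolding assms(2) by blast
  then have bij: "bij_betw (digit_products n) ?Z ?Y"
    using digit_products_inj unfolding assms(2) bij_betw_def by blast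
  define f where "f = inv_into ?Z (digit_products n)"
  have "(\<forall>j\<in>{1..n}. y j = (\<Prod>h\<in>{1..N}. f y h ^ eps j h))
      \<and> Lcm (y ` {1..n}) = (\<Prod>h\<in>{1..N}. f y h)" if "y \<in> ?Y" for y
  proof -
    have y: "y \<in> digit_products n ` ?Z" using that image by simp
    have "f y \<in> ?Z" unfolding f_def using y by (rule inv_into_into)
    moreover have inverse: "digit_products n (f y) = y" unfolding f_def using y by (rule f_inv_into_f)
    then have "y j = (\<Prod>h\<in>{1..N}. f y h ^ eps j h)" if "j \<in> {1..n}" for j
      using digit_products_apply[OF that, of "f y"] by (simp add: assms(2))
    ultimately show ?thesis
      using digit_products_Lcm[of "f y" n] inverse by (simp add: assms(2))
  qed
  then show ?thesis
    using bij_betw_inv_into[OF bij] unfolding f_def by blast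
qed

end
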